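(* Let $G$ be a connected nontrivial graph with $m$ vertices and let $n\geq4$. Then $$\lambda'(G\boxtimes K_n)=\min\{n^2\lambda(G),\ (n-1)(m+2e(G)),\ 2n\delta(G)+2n-4\}.$$
   Context: All graphs are finite, simple and undirected; "nontrivial" means having at least two vertices. $K_n$ denotes the complete graph on $n$ vertices. For a graph $G$: $e(G)=|E(G)|$; $\delta(G)$ is the minimum degree; $\lambda(G)$ is the edge-connectivity. A restricted edge-cut of a connected graph $G$ is a set $S\subseteq E(G)$ such that $G-S$ is disconnected and every component of $G-S$ has at least $2$ vertices; the restricted edge-connectivity $\lambda'(G)$ is the minimum cardinality of a restricted edge-cut. The strong product $G\boxtimes H$ has vertex set $V(G)\times V(H)$, with $(x_1,y_1)$ and $(x_2,y_2)$ adjacent iff either $x_1=x_2$ and $y_1y_2\in E(H)$, or $y_1=y_2$ and $x_1x_2\in E(G)$, or $x_1x_2\in E(G)$ and $y_1y_2\in E(H)$. *)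

theory Defs
  imports Main
begin

definition simple_graph :: "'a set \<Rightarrow> 'a set set \<Rightarrow> bool" where
  "simple_graph V E \<longleftrightarrow> finite V \<and> (\<forall>e\<in>E. e \<subseteq> V \<and> card e = 2)"

definition adj :: "'a set set \<Rightarrow> 'a \<Rightarrow> 'a \<Rightarrow> bool" where
  "adj E x y \<longleftrightarrow> {x, y} \<in> E \<and> x \<noteq> y"

definition reachable :: "'a set \<Rightarrow> 'a set set \<Rightarrow> 'a \<Rightarrow> 'a \<Rightarrow> bool" where
  "reachable V E = (\<lambda>x y. x \<in> V \<and> y \<in> V \<and> adj E x y)\<^sup>*\<^sup>*"

definition connected_graph :: "'a set \<Rightarrow> 'a set set \<Rightarrow> bool" where
  "connected_graph V E \<longleftrightarrow> V \<noteq> {} \<and> (\<forall>x\<in>V. \<forall>y\<in>V. reachable V E x y)"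

definition component :: "'a set \<Rightarrow> 'a set set \<Rightarrow> 'a \<Rightarrow> 'a set" where
  "component V E v = {u \<in> V. reachable V E v u}"

definition degree :: "'a set set \<Rightarrow> 'a \<Rightarrow> nat" where
  "degree E v = card {u. adj E v u}"

definition min_degree :: "'a set \<Rightarrow> 'a set set \<Rightarrow> nat" where
  "min_degree V E = Min (degree E ` V)"

definition edge_connectivity :: "'a set \<Rightarrow> 'a set set \<Rightarrow> nat" where
  "edge_connectivity V E = Min {card S | S. S \<subseteq> E \<and> \<not> connected_graph V (E - S)}"

definition restricted_edge_cut :: "'a set \<Rightarrow> 'a set set \<Rightarrow> 'a set set \<Rightarrow> bool" where
  "restricted_edge_cut V E S \<longleftrightarrow> S \<subseteq> E \<and> \<not> connected_graph V (E - S) \<and>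
     (\<forall>v\<in>V. card (component V (E - S) v) \<ge> 2)"

definition restricted_edge_connectivity :: "'a set \<Rightarrow> 'a set set \<Rightarrow> nat" where
  "restricted_edge_connectivity V E = Min {card S | S. restricted_edge_cut V E S}"

definition complete_V :: "nat \<Rightarrow> nat set" where
  "complete_V n = {0..<n}"

definition complete_E :: "nat \<Rightarrow> nat set set" where
  "complete_E n = {{i, j} | i j. i < n \<and> j < n \<and> i \<noteq> j}"

definition strong_V :: "'a set \<Rightarrow> 'b set \<Rightarrow> ('a \<times> 'b) set" where
  "strong_V V1 V2 = V1 \<times> V2"

definition strong_E :: "'a set \<Rightarrow> 'a set set \<Rightarrow> 'b set \<Rightarrow> 'b set set \<Rightarrow> ('a \<times> 'b) set set" where
  "strong_E V1 E1 V2 E2 = {{(x1, y1), (x2, y2)} | x1 y1 x2 y2.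
      x1 \<in> V1 \<and> x2 \<in> V1 \<and> y1 \<in> V2 \<and> y2 \<in> V2 \<and>
      ((x1 = x2 \<and> {y1, y2} \<in> E2) \<or> (y1 = y2 \<and> {x1, x2} \<in> E1) \<or>
       ({x1, x2} \<in> E1 \<and> {y1, y2} \<in> E2))}"

end

theory Submission
  imports Defs
begin

text \<open>Every restricted edge-cut of \<open>G \<boxtimes> K\<^sub>n\<close> contains the whole boundary of a vertex set
  \<open>A\<close> with \<open>|A| \<ge> 2\<close> and \<open>|A\<^sup>c| \<ge> 2\<close>. If \<open>A\<close> meets the fibre over \<open>x\<close> in \<open>a x\<close>
  vertices, this boundary has \<open>\<Sum>\<^sub>x a x ((n - a x) + \<Sum>\<^sub>z\<^sub>~\<^sub>x (n - a z))\<close> edges, a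
  quantity concave in each single \<open>a x\<close>. So a partially filled fibre can be emptied or filled
  without increasing it, until either every fibre is full or empty, and the boundary is \<open>n\<^sup>2\<close>
  times an edge cut of \<open>G\<close>, or one side is so small that a direct count gives at least
  \<open>2n(\<delta>+1) - 4\<close>. Both bounds are attained: by lifting a minimum edge cut of \<open>G\<close>, and by two
  vertices in the fibre over a vertex of minimum degree. The term \<open>(n-1)(m+2e(G))\<close>, the
  boundary of a transversal, never falls below \<open>2n(\<delta>+1) - 4\<close>.\<close>

section \<open>Boundaries weighted by fibre sizes\<close>

text \<open>With \<open>a x\<close> and \<open>b x\<close> the numbers of vertices of the fibre over \<open>x\<close> on either side of a
  cut of \<open>G \<boxtimes> K\<^sub>n\<close>, this counts the crossing edges: a vertex of the fibre over \<open>x\<close> is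
  adjacent to every other vertex over the closed neighbourhood of \<open>x\<close>.\<close>
definition weighted_cut :: "'a set \<Rightarrow> ('a \<Rightarrow> 'a set) \<Rightarrow> ('a \<Rightarrow> nat) \<Rightarrow> ('a \<Rightarrow> nat) \<Rightarrow> nat" where
  "weighted_cut V N a b = (\<Sum>x\<in>V. a x * (b x + (\<Sum>z\<in>N x. b z)))"

lemma two_mul_sub_four_le_mul_diff:
  fixes k c :: nat
  assumes "2 \<le> k" "k + 2 \<le> c"
  shows "2 * c - 4 \<le> k * (c - k)"
proof -
  have "\<exists>i j. k = i + 2 \<and> c = i + j + 4" using assms by presburger
  then show ?thesis by (auto simp: algebra_simps)
qed

locale symmetric_nbhd =
  fixes V :: "'a set" and N :: "'a \<Rightarrow> 'a set"
  assumes finite_vertices: "finite V"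
    and nbhd_subset: "\<And>x. N x \<subseteq> V"
    and not_mem_nbhd: "\<And>x. x \<notin> N x"
    and nbhd_sym: "\<And>x z. z \<in> N x \<longleftrightarrow> x \<in> N z"
begin

lemma finite_nbhd: "finite (N x)"
  using finite_vertices nbhd_subset finite_subset by blast

lemma weighted_cut_commute: "weighted_cut V N a b = weighted_cut V N b a"
proof -
  have "(\<Sum>x\<in>V. \<Sum>z\<in>{z. z \<in> V \<and> z \<in> N x}. a x * b z)
      = (\<Sum>z\<in>V. \<Sum>x\<in>{x. x \<in> V \<and> z \<in> N x}. a x * b z)"
    by (rule sum.swap_restrict[OF finite_vertices finite_vertices])
  moreover have "{z. z \<in> V \<and> z \<in> N x} = N x" for x
    using nbhd_subset by blast
  moreover have "{x. x \<in> V \<and> z \<in> N x} = N z" for z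
    using nbhd_subset nbhd_sym by blast
  ultimately have "(\<Sum>x\<in>V. \<Sum>z\<in>N x. a x * b z) = (\<Sum>z\<in>V. \<Sum>x\<in>N z. b z * a x)"
    by (simp add: mult.commute)
  then show ?thesis
    unfolding weighted_cut_def
    by (simp add: distrib_left sum.distrib sum_distrib_left mult.commute)
qed

lemma weighted_cut_ge_mass:
  assumes full: "\<And>x. x \<in> V \<Longrightarrow> a x + b x = n"
    and deg: "\<And>x. x \<in> V \<Longrightarrow> d \<le> card (N x)"
  shows "(\<Sum>x\<in>V. a x) * (n + n * d - (\<Sum>x\<in>V. a x)) \<le> weighted_cut V N a b"
proof -
  let ?s = "\<Sum>x\<in>V. a x"
  have "n + n * d - ?s \<le> b x + (\<Sum>z\<in>N x. b z)" if x: "x \<in> V" for x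
  proof -
    have "(b x + (\<Sum>z\<in>N x. b z)) + (a x + (\<Sum>z\<in>N x. a z)) = n + n * card (N x)"
      using full x nbhd_subset by (simp add: subset_iff sum.distrib[symmetric] add_ac)
    moreover have "a x + (\<Sum>z\<in>N x. a z) = (\<Sum>z\<in>insert x (N x). a z)"
      using not_mem_nbhd finite_nbhd by simp
    moreover have "(\<Sum>z\<in>insert x (N x). a z) \<le> ?s"
      using nbhd_subset x finite_vertices by (intro sum_mono2) auto
    moreover have "n * d \<le> n * card (N x)"
      using deg x by simp
    ultimately show ?thesis by linarith
  qed
  then have "(\<Sum>x\<in>V. a x * (n + n * d - ?s)) \<le> weighted_cut V N a b"
    unfolding weighted_cut_def by (intro sum_mono) (simp add: mult_le_mono2)
  then show ?thesis by (simp add: sum_distrib_right)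
qed

lemma weighted_cut_small_side:
  assumes "\<And>x. x \<in> V \<Longrightarrow> a x + b x = n" and "\<And>x. x \<in> V \<Longrightarrow> d \<le> card (N x)"
    and "2 \<le> (\<Sum>x\<in>V. a x)" "(\<Sum>x\<in>V. a x) + 2 \<le> n + n * d"
  shows "2 * (n + n * d) - 4 \<le> weighted_cut V N a b"
proof -
  have "2 * (n + n * d) - 4 \<le> (\<Sum>x\<in>V. a x) * (n + n * d - (\<Sum>x\<in>V. a x))"
    using two_mul_sub_four_le_mul_diff[OF assms(3,4)] .
  also have "\<dots> \<le> weighted_cut V N a b"
    using weighted_cut_ge_mass[OF assms(1,2)] .
  finally show ?thesis .
qed

lemma weighted_cut_split:
  assumes x: "x \<in> V"
  shows "weighted_cut V N a (\<lambda>z. n - a z)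
    = a x * (n - a x) + a x * (\<Sum>z\<in>N x. n - a z) + (n - a x) * (\<Sum>z\<in>N x. a z)
      + (\<Sum>z\<in>V - {x}. a z * ((n - a z) + (\<Sum>u\<in>N z - {x}. n - a u)))"
proof -
  let ?rest = "\<lambda>z. a z * ((n - a z) + (\<Sum>u\<in>N z - {x}. n - a u))"
  have "a z * ((n - a z) + (\<Sum>u\<in>N z. n - a u))
      = ?rest z + (if x \<in> N z then a z * (n - a x) else 0)" for z
  proof (cases "x \<in> N z")
    case True
    then have "(\<Sum>u\<in>N z. n - a u) = (n - a x) + (\<Sum>u\<in>N z - {x}. n - a u)"
      using finite_nbhd by (simp add: sum.remove)
    with True show ?thesis by (simp add: distrib_left)
  qed simp
  then have "(\<Sum>z\<in>V - {x}. a z * ((n - a z) + (\<Sum>u\<in>N z. n - a u)))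
      = (\<Sum>z\<in>V - {x}. ?rest z) + (\<Sum>z\<in>V - {x}. if x \<in> N z then a z * (n - a x) else 0)"
    by (simp add: sum.distrib)
  also have "(\<Sum>z\<in>V - {x}. if x \<in> N z then a z * (n - a x) else 0)
      = (\<Sum>z\<in>{z \<in> V - {x}. x \<in> N z}. a z * (n - a x))"
    using finite_vertices by (rule sum.inter_filter[symmetric, OF finite_Diff])
  also have "{z \<in> V - {x}. x \<in> N z} = N x"
    using nbhd_subset nbhd_sym not_mem_nbhd by blast
  finally show ?thesis
    unfolding weighted_cut_def using x finite_vertices
    by (simp add: sum.remove distrib_left sum_distrib_left sum_distrib_right add_ac mult_ac)
qed

text \<open>As a function of \<open>a x\<close> the boundary is a concave quadratic, so its minimum over
  \<open>[0, n]\<close> is attained at an endpoint.\<close>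
lemma weighted_cut_ge_min_extremes:
  assumes x: "x \<in> V" and "a x \<le> n"
  shows "min (weighted_cut V N (a(x := 0)) (\<lambda>z. n - (a(x := 0)) z))
             (weighted_cut V N (a(x := n)) (\<lambda>z. n - (a(x := n)) z))
         \<le> weighted_cut V N a (\<lambda>z. n - a z)"
proof -
  define K where "K a = (\<Sum>z\<in>V - {x}. a z * ((n - a z) + (\<Sum>u\<in>N z - {x}. n - a u)))" for a
  have K_upd: "K (a(x := s)) = K a" for s
    unfolding K_def by (intro sum.cong refl) (auto intro!: sum.cong)
  have nbhd_upd: "(\<Sum>z\<in>N x. f ((a(x := s)) z)) = (\<Sum>z\<in>N x. f (a z))" for s and f :: "nat \<Rightarrow> nat"
    using not_mem_nbhd by (intro sum.cong refl) (metis fun_upd_other)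
  let ?Sb = "\<Sum>z\<in>N x. n - a z" and ?Sa = "\<Sum>z\<in>N x. a z"
  have F: "weighted_cut V N a (\<lambda>z. n - a z) = a x * (n - a x) + a x * ?Sb + (n - a x) * ?Sa + K a"
    using weighted_cut_split[OF x] K_def by simp
  have F0: "weighted_cut V N (a(x := 0)) (\<lambda>z. n - (a(x := 0)) z) = n * ?Sa + K a"
    using weighted_cut_split[OF x, of "a(x := 0)"] K_def K_upd[of 0] nbhd_upd[of "\<lambda>t. t" 0]
    by simp
  have Fn: "weighted_cut V N (a(x := n)) (\<lambda>z. n - (a(x := n)) z) = n * ?Sb + K a"
    using weighted_cut_split[OF x, of "a(x := n)"] K_def K_upd[of n] nbhd_upd[of "\<lambda>t. n - t" n]
    by simp
  have n_split: "n * t = a x * t + (n - a x) * t" for t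
    using \<open>a x \<le> n\<close> by (metis add_mult_distrib le_add_diff_inverse)
  show ?thesis
  proof (cases "?Sb \<le> ?Sa")
    case True
    then have "n * ?Sb \<le> a x * ?Sb + (n - a x) * ?Sa"
      unfolding n_split by (simp add: mult_le_mono2)
    then show ?thesis unfolding F Fn by (simp add: min.coboundedI2)
  next
    case False
    then have "n * ?Sa \<le> a x * ?Sb + (n - a x) * ?Sa"
      unfolding n_split by (simp add: mult_le_mono2)
    then show ?thesis unfolding F F0 by (simp add: min.coboundedI1)
  qed
qed

lemma weighted_cut_extreme:
  assumes "\<And>x. x \<in> V \<Longrightarrow> a x = 0 \<or> a x = n"
  shows "weighted_cut V N a (\<lambda>z. n - a z)
    = n * n * card (Sigma {x \<in> V. a x = n} (\<lambda>x. N x - {x \<in> V. a x = n}))"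
proof -
  let ?P = "{x \<in> V. a x = n}"
  have "a x * (n - a x + (\<Sum>z\<in>N x. n - a z)) = (if x \<in> ?P then n * (n * card (N x - ?P)) else 0)"
    if x: "x \<in> V" for x
  proof (cases "a x = n")
    case True
    have "(\<Sum>z\<in>N x. n - a z) = (\<Sum>z\<in>N x. if z \<notin> ?P then n else 0)"
      using assms nbhd_subset by (intro sum.cong refl) fastforce
    also have "\<dots> = n * card (N x - ?P)"
      using finite_nbhd by (simp add: sum.inter_filter[symmetric] set_diff_eq)
    finally show ?thesis using True x by simp
  next
    case False
    with assms[OF x] show ?thesis by simp
  qed
  then have "weighted_cut V N a (\<lambda>z. n - a z) = (\<Sum>x\<in>?P. n * (n * card (N x - ?P)))"
    unfolding weighted_cut_def using finite_vertices
    by (simp add: sum.inter_filter[symmetric] cong: sum.cong)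
  also have "\<dots> = n * n * card (Sigma ?P (\<lambda>x. N x - ?P))"
    using finite_vertices finite_nbhd by (simp add: card_SigmaI sum_distrib_left mult.assoc)
  finally show ?thesis .
qed

lemma weighted_cut_extreme_ge:
  assumes lam: "\<And>P. P \<subseteq> V \<Longrightarrow> P \<noteq> {} \<Longrightarrow> V - P \<noteq> {} \<Longrightarrow> lam \<le> card (Sigma P (\<lambda>x. N x - P))"
    and extreme: "\<forall>x\<in>V. a x = 0 \<or> a x = n"
    and "0 < (\<Sum>x\<in>V. a x)" and "0 < (\<Sum>x\<in>V. n - a x)"
  shows "n * n * lam \<le> weighted_cut V N a (\<lambda>z. n - a z)"
proof -
  let ?P = "{x \<in> V. a x = n}"
  have "?P \<noteq> {}"
  proof
    assume "?P = {}"
    with extreme have "(\<Sum>x\<in>V. a x) = 0" by (intro sum.neutral) auto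
    with \<open>0 < (\<Sum>x\<in>V. a x)\<close> show False by simp
  qed
  moreover have "V - ?P \<noteq> {}"
  proof
    assume "V - ?P = {}"
    then have "(\<Sum>x\<in>V. n - a x) = 0" by (intro sum.neutral) auto
    with \<open>0 < (\<Sum>x\<in>V. n - a x)\<close> show False by simp
  qed
  ultimately have "n * n * lam \<le> n * n * card (Sigma ?P (\<lambda>x. N x - ?P))"
    using lam by simp
  then show ?thesis using weighted_cut_extreme extreme by simp
qed

lemma weighted_cut_lower_bound:
  fixes a :: "'a \<Rightarrow> nat"
  assumes n: "2 \<le> n" and d: "1 \<le> d" and deg: "\<And>x. x \<in> V \<Longrightarrow> d \<le> card (N x)"
    and lam: "\<And>P. P \<subseteq> V \<Longrightarrow> P \<noteq> {} \<Longrightarrow> V - P \<noteq> {} \<Longrightarrow> lam \<le> card (Sigma P (\<lambda>x. N x - P))"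
    and "\<forall>x\<in>V. a x \<le> n" and "2 \<le> (\<Sum>x\<in>V. a x)" and "2 \<le> (\<Sum>x\<in>V. n - a x)"
  shows "min (n * n * lam) (2 * (n + n * d) - 4) \<le> weighted_cut V N a (\<lambda>z. n - a z)"
  using assms(5-7)
proof (induction "card {x \<in> V. 0 < a x \<and> a x < n}" arbitrary: a rule: less_induct)
  case (less a)
  let ?c = "n + n * d" and ?sA = "\<Sum>x\<in>V. a x" and ?sB = "\<Sum>x\<in>V. n - a x"
  consider "?sA + 2 \<le> ?c" | "?sB + 2 \<le> ?c" | "\<forall>x\<in>V. a x = 0 \<or> a x = n"
    | x where "x \<in> V" "0 < a x" "a x < n" "?c \<le> ?sA + 1" "?c \<le> ?sB + 1"
  proof (cases "?sA + 2 \<le> ?c \<or> ?sB + 2 \<le> ?c \<or> (\<forall>x\<in>V. a x = 0 \<or> a x = n)")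
    case False
    then obtain x where "x \<in> V" "a x \<noteq> 0" "a x \<noteq> n" by blast
    with False less.prems(1) show ?thesis by (intro that(4)[of x]) auto
  qed blast+
  then show ?case
  proof cases
    case 1
    then show ?thesis
      using weighted_cut_small_side[of a "\<lambda>z. n - a z"] less.prems deg by (simp add: min.coboundedI2)
  next
    case 2
    then have "2 * ?c - 4 \<le> weighted_cut V N (\<lambda>z. n - a z) a"
      using weighted_cut_small_side[of "\<lambda>z. n - a z" a] less.prems deg by simp
    then show ?thesis by (simp add: weighted_cut_commute min.coboundedI2)
  next
    case 3
    then show ?thesis
      using weighted_cut_extreme_ge[OF lam] less.prems by (simp add: min.coboundedI1)
  next
    case 4
    note x = 4(1-3)
    let ?mixed = "\<lambda>a. card {z \<in> V. 0 < a z \<and> a z < n}"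
    have IH: "min (n * n * lam) (2 * ?c - 4) \<le> weighted_cut V N (a(x := s)) (\<lambda>z. n - (a(x := s)) z)"
      if s: "s = 0 \<or> s = n" for s
    proof (rule less.hyps)
      have "{z \<in> V. 0 < (a(x := s)) z \<and> (a(x := s)) z < n} = {z \<in> V. 0 < a z \<and> a z < n} - {x}"
        using s by auto
      then show "?mixed (a(x := s)) < ?mixed a"
        using x finite_vertices by (simp only:) (intro card_Diff1_less, auto)
      have "?sA = a x + (\<Sum>z\<in>V - {x}. a z)" "?sB = (n - a x) + (\<Sum>z\<in>V - {x}. n - a z)"
        using x finite_vertices by (simp_all add: sum.remove)
      moreover have "n \<le> n * d" using d by simp
      ultimately have "2 \<le> (\<Sum>z\<in>V - {x}. a z)" "2 \<le> (\<Sum>z\<in>V - {x}. n - a z)"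
        using 4 n by linarith+
      then show "2 \<le> (\<Sum>z\<in>V. (a(x := s)) z)" "2 \<le> (\<Sum>z\<in>V. n - (a(x := s)) z)"
        using x finite_vertices by (simp_all add: sum.remove)
      show "\<forall>z\<in>V. (a(x := s)) z \<le> n" using less.prems(1) s by auto
    qed
    show ?thesis
      using weighted_cut_ge_min_extremes[of x a n] IH[of 0] IH[of n] x by simp
  qed
qed

end

section \<open>Edge boundaries and restricted edge-cuts\<close>

definition boundary :: "'b set set \<Rightarrow> 'b set \<Rightarrow> 'b set set" where
  "boundary F A = {e \<in> F. \<exists>u v. e = {u, v} \<and> u \<in> A \<and> v \<notin> A}"

lemma reachable_sym: "reachable W F x y \<Longrightarrow> reachable W F y x"
  unfolding reachable_def
proof (induction rule: rtranclp_induct)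
  case (step y z)
  then have "(\<lambda>x y. x \<in> W \<and> y \<in> W \<and> adj F x y) z y"
    by (auto simp: adj_def insert_commute)
  then show ?case using step(3) by (rule converse_rtranclp_into_rtranclp)
qed simp

lemma reachable_closed:
  assumes "reachable W F x y" "x \<in> A" "\<And>u v. u \<in> A \<Longrightarrow> v \<in> W \<Longrightarrow> adj F u v \<Longrightarrow> v \<in> A"
  shows "y \<in> A"
  using assms(1) unfolding reachable_def
  by (induction rule: rtranclp_induct) (use assms in auto)

lemma component_closed:
  assumes "u \<in> component W F x" "v \<in> W" "adj F u v"
  shows "v \<in> component W F x"
  using assms unfolding component_def reachable_def
  by (auto intro: rtranclp.rtrancl_into_rtrancl)

lemma boundary_of_component_subset:
  assumes "\<And>e. e \<in> F \<Longrightarrow> e \<subseteq> W"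
  shows "boundary F (component W (F - S) x) \<subseteq> S"
proof
  fix e assume "e \<in> boundary F (component W (F - S) x)"
  then obtain u v where e: "e \<in> F" "e = {u, v}" "u \<in> component W (F - S) x"
    "v \<notin> component W (F - S) x"
    by (auto simp: boundary_def)
  moreover have "u \<noteq> v" using e by blast
  ultimately show "e \<in> S"
    using assms component_closed[of u W "F - S" x v] by (auto simp: adj_def)
qed

lemma boundary_restricted_edge_cut:
  assumes "finite W" and "A \<subseteq> W" and "u0 \<in> A" and "w0 \<in> W" "w0 \<notin> A"
    and partner: "\<And>v. v \<in> W \<Longrightarrow> \<exists>w\<in>W. w \<noteq> v \<and> {v, w} \<in> F \<and> (v \<in> A \<longleftrightarrow> w \<in> A)"
  shows "restricted_edge_cut W F (boundary F A)"
  unfolding restricted_edge_cut_def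
proof (intro conjI ballI)
  show "boundary F A \<subseteq> F" by (auto simp: boundary_def)
  show "\<not> connected_graph W (F - boundary F A)"
  proof
    assume "connected_graph W (F - boundary F A)"
    then have "reachable W (F - boundary F A) u0 w0"
      using assms by (auto simp: connected_graph_def)
    then have "w0 \<in> A"
      by (rule reachable_closed) (use \<open>u0 \<in> A\<close> in \<open>auto simp: adj_def boundary_def\<close>)
    with \<open>w0 \<notin> A\<close> show False by simp
  qed
  fix v assume v: "v \<in> W"
  obtain w where w: "w \<in> W" "w \<noteq> v" "{v, w} \<in> F" "v \<in> A \<longleftrightarrow> w \<in> A"
    using partner[OF v] by blast
  then have "{v, w} \<notin> boundary F A"
    by (auto simp: boundary_def doubleton_eq_iff)
  with w v have "{v, w} \<subseteq> component W (F - boundary F A) v"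
    unfolding component_def reachable_def by (auto simp: adj_def)
  moreover have "finite (component W (F - boundary F A) v)"
    using \<open>finite W\<close> by (auto simp: component_def)
  ultimately have "card {v, w} \<le> card (component W (F - boundary F A) v)"
    by (rule card_mono[rotated])
  then show "2 \<le> card (component W (F - boundary F A) v)" using w by simp
qed

lemma restricted_edge_cut_contains_boundary:
  assumes "finite W" and edges: "\<And>e. e \<in> F \<Longrightarrow> e \<subseteq> W" and S: "restricted_edge_cut W F S"
    and "W \<noteq> {}"
  obtains A where "A \<subseteq> W" "2 \<le> card A" "2 \<le> card (W - A)" "boundary F A \<subseteq> S"
proof -
  have big: "\<And>v. v \<in> W \<Longrightarrow> 2 \<le> card (component W (F - S) v)"
    using S by (auto simp: restricted_edge_cut_def)
  obtain x y where xy: "x \<in> W" "y \<in> W" "\<not> reachable W (F - S) x y"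
    using S \<open>W \<noteq> {}\<close> by (auto simp: restricted_edge_cut_def connected_graph_def)
  define A where "A = component W (F - S) x"
  have "component W (F - S) y \<subseteq> W - A"
  proof
    fix u assume "u \<in> component W (F - S) y"
    then have "u \<in> W" "reachable W (F - S) u y"
      using reachable_sym by (auto simp: component_def)
    then show "u \<in> W - A"
      using xy(3) unfolding A_def component_def reachable_def by (blast intro: rtranclp_trans)
  qed
  then have "card (component W (F - S) y) \<le> card (W - A)"
    using \<open>finite W\<close> by (intro card_mono) auto
  then show ?thesis
    using that[of A] big[OF xy(1)] big[OF xy(2)] boundary_of_component_subset[OF edges]
    by (auto simp: A_def component_def)
qed

lemma finite_restricted_cut_sizes:
  "finite F \<Longrightarrow> finite {card S | S. restricted_edge_cut W F S}"
  by (rule finite_subset[of _ "card ` Pow F"]) (auto simp: restricted_edge_cut_def)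

lemma Min_card_eq_min:
  assumes fin: "finite {card S | S. P S}" and lower: "\<And>S. P S \<Longrightarrow> min p q \<le> card S"
    and "P S1" "card S1 \<le> p" and "P S2" "card S2 \<le> q"
  shows "Min {card S | S. P S} = min p q"
proof (rule antisym)
  have "Min {card S | S. P S} \<le> card S1" "Min {card S | S. P S} \<le> card S2"
    using fin \<open>P S1\<close> \<open>P S2\<close> by (auto intro: Min_le)
  then show "Min {card S | S. P S} \<le> min p q"
    using \<open>card S1 \<le> p\<close> \<open>card S2 \<le> q\<close> by simp
  have "Min {card S | S. P S} \<in> {card S | S. P S}"
    using fin \<open>P S1\<close> by (intro Min_in) auto
  then show "min p q \<le> Min {card S | S. P S}"
    using lower by auto
qed

definition nbhd :: "'a set set \<Rightarrow> 'a \<Rightarrow> 'a set" where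
  "nbhd E x = {u. adj E x u}"

lemma symmetric_nbhd_simple_graph: "simple_graph V E \<Longrightarrow> symmetric_nbhd V (nbhd E)"
  by unfold_locales (auto simp: nbhd_def adj_def simple_graph_def insert_commute)

lemma edge_iff_mem_nbhd: "simple_graph V E \<Longrightarrow> {x, z} \<in> E \<longleftrightarrow> z \<in> nbhd E x"
  by (force simp: nbhd_def adj_def simple_graph_def)

lemma simple_graph_finite_edges: "simple_graph V E \<Longrightarrow> finite E"
  unfolding simple_graph_def by (meson Pow_iff finite_Pow_iff finite_subset subsetI)

lemma sum_card_nbhd_le:
  assumes sg: "simple_graph V E"
  shows "(\<Sum>x\<in>V. card (nbhd E x)) \<le> 2 * card E"
proof -
  interpret symmetric_nbhd V "nbhd E" by (rule symmetric_nbhd_simple_graph[OF sg])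
  have finE: "finite E" using simple_graph_finite_edges[OF sg] .
  have ordered: "card {p \<in> e \<times> e. fst p \<noteq> snd p} = 2" if e: "e \<in> E" for e
  proof -
    obtain a b where "e = {a, b}" "a \<noteq> b"
      using e sg by (auto simp: simple_graph_def card_2_iff)
    then have "{p \<in> e \<times> e. fst p \<noteq> snd p} = {(a, b), (b, a)}" by auto
    with \<open>a \<noteq> b\<close> show ?thesis by simp
  qed
  have "(\<Sum>x\<in>V. card (nbhd E x)) = card (Sigma V (nbhd E))"
    using finite_vertices finite_nbhd by (simp add: card_SigmaI)
  also have "\<dots> \<le> card (\<Union>e\<in>E. {p \<in> e \<times> e. fst p \<noteq> snd p})"
    using finE ordered by (intro card_mono) (auto simp: nbhd_def adj_def intro: card_ge_0_finite)
  also have "\<dots> \<le> (\<Sum>e\<in>E. card {p \<in> e \<times> e. fst p \<noteq> snd p})"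
    by (rule card_UN_le[OF finE])
  also have "\<dots> = 2 * card E"
    using ordered by simp
  finally show ?thesis .
qed

section \<open>Boundaries in the strong product with a complete graph\<close>

lemma complete_E_iff: "{y1, y2} \<in> complete_E n \<longleftrightarrow> y1 < n \<and> y2 < n \<and> y1 \<noteq> y2"
  unfolding complete_E_def by (auto simp: doubleton_eq_iff)

lemma strong_E_complete_iff:
  assumes sg: "simple_graph V E"
  shows "{p, q} \<in> strong_E V E {0..<n} (complete_E n) \<longleftrightarrow>
    p \<in> V \<times> {0..<n} \<and> q \<in> V \<times> {0..<n} \<and> p \<noteq> q \<and> (fst p = fst q \<or> fst q \<in> nbhd E (fst p))"
proof -
  interpret symmetric_nbhd V "nbhd E" by (rule symmetric_nbhd_simple_graph[OF sg])
  have edge: "(a1 \<in> V \<and> a2 \<in> V \<and> b1 \<in> {0..<n} \<and> b2 \<in> {0..<n} \<and>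
      ((a1 = a2 \<and> {b1, b2} \<in> complete_E n) \<or> (b1 = b2 \<and> {a1, a2} \<in> E) \<or>
       ({a1, a2} \<in> E \<and> {b1, b2} \<in> complete_E n)))
    \<longleftrightarrow> (a1, b1) \<in> V \<times> {0..<n} \<and> (a2, b2) \<in> V \<times> {0..<n} \<and> (a1, b1) \<noteq> (a2, b2)
        \<and> (a1 = a2 \<or> a2 \<in> nbhd E a1)" for a1 a2 b1 b2
    unfolding edge_iff_mem_nbhd[OF sg] complete_E_iff using not_mem_nbhd by auto
  show ?thesis
  proof
    assume "{p, q} \<in> strong_E V E {0..<n} (complete_E n)"
    then obtain a1 b1 a2 b2 where pq: "{p, q} = {(a1, b1), (a2, b2)}"
      and "a1 \<in> V \<and> a2 \<in> V \<and> b1 \<in> {0..<n} \<and> b2 \<in> {0..<n} \<and>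
        ((a1 = a2 \<and> {b1, b2} \<in> complete_E n) \<or> (b1 = b2 \<and> {a1, a2} \<in> E) \<or>
         ({a1, a2} \<in> E \<and> {b1, b2} \<in> complete_E n))"
      unfolding strong_E_def by blast
    then have "(a1, b1) \<in> V \<times> {0..<n} \<and> (a2, b2) \<in> V \<times> {0..<n} \<and> (a1, b1) \<noteq> (a2, b2)
        \<and> (a1 = a2 \<or> a2 \<in> nbhd E a1)"
      using edge by blast
    moreover from pq have "(p = (a1, b1) \<and> q = (a2, b2)) \<or> (p = (a2, b2) \<and> q = (a1, b1))"
      by (simp add: doubleton_eq_iff)
    ultimately show "p \<in> V \<times> {0..<n} \<and> q \<in> V \<times> {0..<n} \<and> p \<noteq> q
        \<and> (fst p = fst q \<or> fst q \<in> nbhd E (fst p))"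
      using nbhd_sym by auto
  next
    assume "p \<in> V \<times> {0..<n} \<and> q \<in> V \<times> {0..<n} \<and> p \<noteq> q \<and> (fst p = fst q \<or> fst q \<in> nbhd E (fst p))"
    moreover obtain x1 y1 x2 y2 where pq: "p = (x1, y1)" "q = (x2, y2)" by (cases p, cases q)
    ultimately have "x1 \<in> V \<and> x2 \<in> V \<and> y1 \<in> {0..<n} \<and> y2 \<in> {0..<n} \<and>
        ((x1 = x2 \<and> {y1, y2} \<in> complete_E n) \<or> (y1 = y2 \<and> {x1, x2} \<in> E) \<or>
         ({x1, x2} \<in> E \<and> {y1, y2} \<in> complete_E n))"
      using edge[of x1 x2 y1 y2] by simp
    then show "{p, q} \<in> strong_E V E {0..<n} (complete_E n)"
      unfolding strong_E_def pq by blast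
  qed
qed

lemma strong_E_complete_subset:
  assumes sg: "simple_graph V E" and e: "e \<in> strong_E V E {0..<n} (complete_E n)"
  shows "e \<subseteq> V \<times> {0..<n}"
proof -
  obtain p q where "e = {p, q}" using e unfolding strong_E_def by blast
  then show ?thesis using e strong_E_complete_iff[OF sg, of p q n] by simp
qed

lemma finite_strong_E_complete:
  assumes sg: "simple_graph V E"
  shows "finite (strong_E V E {0..<n} (complete_E n))"
proof (rule finite_subset)
  show "strong_E V E {0..<n} (complete_E n) \<subseteq> Pow (V \<times> {0..<n})"
    using strong_E_complete_subset[OF sg] by blast
  show "finite (Pow (V \<times> {0..<n}))" using sg by (simp add: simple_graph_def)
qed

definition fibre_count :: "('a \<times> nat) set \<Rightarrow> nat \<Rightarrow> 'a \<Rightarrow> nat" where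
  "fibre_count A n x = card {y \<in> {0..<n}. (x, y) \<in> A}"

lemma fibre_count_le: "fibre_count A n x \<le> n"
proof -
  have "card {y \<in> {0..<n}. (x, y) \<in> A} \<le> card {0..<n}" by (intro card_mono) auto
  then show ?thesis by (simp add: fibre_count_def)
qed

lemma card_fibre_compl: "card {y. y < n \<and> (x, y) \<notin> A} = n - fibre_count A n x"
proof -
  have "{y. y < n \<and> (x, y) \<notin> A} = {0..<n} - {y \<in> {0..<n}. (x, y) \<in> A}" by auto
  moreover have "card ({0..<n} - {y \<in> {0..<n}. (x, y) \<in> A})
      = card {0..<n} - card {y \<in> {0..<n}. (x, y) \<in> A}"
    by (rule card_Diff_subset) auto
  ultimately show ?thesis by (simp add: fibre_count_def)
qed

lemma card_eq_sum_fibre_count: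
  assumes "finite V" "A \<subseteq> V \<times> {0..<n}"
  shows "card A = (\<Sum>x\<in>V. fibre_count A n x)"
proof -
  have "A = Sigma V (\<lambda>x. {y \<in> {0..<n}. (x, y) \<in> A})" using assms(2) by auto
  then have "card A = card (Sigma V (\<lambda>x. {y \<in> {0..<n}. (x, y) \<in> A}))" by simp
  also have "\<dots> = (\<Sum>x\<in>V. fibre_count A n x)" using assms(1) by (simp add: fibre_count_def)
  finally show ?thesis .
qed

lemma card_compl_eq_sum_fibre_count:
  assumes "finite V"
  shows "card (V \<times> {0..<n} - A) = (\<Sum>x\<in>V. n - fibre_count A n x)"
proof -
  have "V \<times> {0..<n} - A = Sigma V (\<lambda>x. {y \<in> {0..<n}. (x, y) \<notin> A})" by auto
  then have "card (V \<times> {0..<n} - A) = card (Sigma V (\<lambda>x. {y \<in> {0..<n}. (x, y) \<notin> A}))" by simp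
  also have "\<dots> = (\<Sum>x\<in>V. card {y \<in> {0..<n}. (x, y) \<notin> A})"
    by (rule card_SigmaI[OF assms]) simp
  also have "\<dots> = (\<Sum>x\<in>V. n - fibre_count A n x)" by (simp add: card_fibre_compl)
  finally show ?thesis .
qed

lemma card_boundary_strong_product:
  assumes sg: "simple_graph V E" and A: "A \<subseteq> V \<times> {0..<n}"
  shows "card (boundary (strong_E V E {0..<n} (complete_E n)) A)
    = weighted_cut V (nbhd E) (fibre_count A n) (\<lambda>x. n - fibre_count A n x)"
proof -
  interpret symmetric_nbhd V "nbhd E" by (rule symmetric_nbhd_simple_graph[OF sg])
  let ?EH = "strong_E V E {0..<n} (complete_E n)" and ?VH = "V \<times> {0..<n}"
  let ?out = "\<lambda>u. {v \<in> ?VH. v \<notin> A \<and> {u, v} \<in> ?EH}"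
  let ?g = "\<lambda>x. (n - fibre_count A n x) + (\<Sum>z\<in>nbhd E x. n - fibre_count A n z)"
  have finA: "finite A" using A finite_vertices finite_subset by blast
  have out: "?out (x, y) = Sigma (insert x (nbhd E x)) (\<lambda>z. {y' \<in> {0..<n}. (z, y') \<notin> A})"
    if "(x, y) \<in> A" for x y
  proof (rule set_eqI)
    fix v :: "'a \<times> nat"
    obtain z y' where v: "v = (z, y')" by (cases v)
    show "v \<in> ?out (x, y) \<longleftrightarrow> v \<in> Sigma (insert x (nbhd E x)) (\<lambda>z. {y' \<in> {0..<n}. (z, y') \<notin> A})"
      unfolding v using strong_E_complete_iff[OF sg, of "(x, y)" "(z, y')" n] that A nbhd_subset
      by auto
  qed
  have card_out: "card (?out u) = ?g (fst u)" if "u \<in> A" for u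
    using that finite_nbhd not_mem_nbhd
    by (cases u) (simp add: out card_SigmaI card_fibre_compl)
  have "boundary ?EH A = (\<lambda>(u, v). {u, v}) ` Sigma A ?out"
  proof (intro equalityI subsetI)
    fix e assume "e \<in> boundary ?EH A"
    then obtain u v where uv: "e = {u, v}" "u \<in> A" "v \<notin> A" "{u, v} \<in> ?EH"
      by (auto simp: boundary_def)
    then have "v \<in> ?VH" using strong_E_complete_iff[OF sg] by blast
    with uv show "e \<in> (\<lambda>(u, v). {u, v}) ` Sigma A ?out" by force
  qed (auto simp: boundary_def)
  moreover have "inj_on (\<lambda>(u, v). {u, v}) (Sigma A ?out)"
    by (auto simp: inj_on_def doubleton_eq_iff)
  ultimately have "card (boundary ?EH A) = (\<Sum>u\<in>A. card (?out u))"
    using finA finite_vertices by (simp add: card_image card_SigmaI)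
  also have "\<dots> = (\<Sum>u\<in>A. ?g (fst u))"
    using card_out by simp
  also have "\<dots> = (\<Sum>u\<in>Sigma V (\<lambda>x. {y \<in> {0..<n}. (x, y) \<in> A}). ?g (fst u))"
    using A by (intro sum.cong) auto
  also have "\<dots> = (\<Sum>x\<in>V. \<Sum>y\<in>{y \<in> {0..<n}. (x, y) \<in> A}. ?g x)"
    using finite_vertices by (subst sum.Sigma) (auto simp: split_beta)
  also have "\<dots> = (\<Sum>x\<in>V. fibre_count A n x * ?g x)"
    by (simp add: fibre_count_def)
  finally show ?thesis by (simp add: weighted_cut_def)
qed

locale connected_simple_graph =
  fixes V :: "'a set" and E :: "'a set set"
  assumes simple: "simple_graph V E"
    and connected: "connected_graph V E"
    and two_vertices: "2 \<le> card V"
begin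

sublocale symmetric_nbhd V "nbhd E"
  by (rule symmetric_nbhd_simple_graph[OF simple])

lemma exists_other_vertex: obtains y where "y \<in> V" "y \<noteq> x"
proof -
  have "\<not> card V \<le> Suc 0" using two_vertices by simp
  then obtain a b where "a \<in> V" "b \<in> V" "a \<noteq> b"
    using card_le_Suc0_iff_eq[OF finite_vertices] by blast
  then show ?thesis using that by blast
qed

lemma vertices_nonempty: "V \<noteq> {}"
  using two_vertices by auto

lemma nbhd_nonempty: "x \<in> V \<Longrightarrow> nbhd E x \<noteq> {}"
proof -
  assume x: "x \<in> V"
  obtain y where y: "y \<in> V" "y \<noteq> x" using exists_other_vertex .
  have "(\<lambda>x y. x \<in> V \<and> y \<in> V \<and> adj E x y)\<^sup>*\<^sup>* x y"
    using connected x y by (simp add: connected_graph_def reachable_def)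
  then obtain z where "adj E x z"
    using y(2) by (cases rule: converse_rtranclpE) auto
  then show ?thesis by (auto simp: nbhd_def)
qed

lemma degree_eq_card_nbhd: "degree E x = card (nbhd E x)"
  by (simp add: degree_def nbhd_def)

lemma min_degree_le: "x \<in> V \<Longrightarrow> min_degree V E \<le> card (nbhd E x)"
  unfolding min_degree_def using finite_vertices by (simp add: degree_eq_card_nbhd[symmetric])

lemma min_degree_attained: obtains x where "x \<in> V" "card (nbhd E x) = min_degree V E"
proof -
  have "min_degree V E \<in> degree E ` V"
    unfolding min_degree_def using finite_vertices vertices_nonempty by (intro Min_in) auto
  then show ?thesis using that by (auto simp: degree_eq_card_nbhd)
qed

lemma min_degree_pos: "1 \<le> min_degree V E"
  using min_degree_attained nbhd_nonempty finite_nbhd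
  by (metis One_nat_def Suc_leI card_gt_0_iff)

lemma finite_edge_cut_sizes: "finite {card S | S. S \<subseteq> E \<and> \<not> connected_graph V (E - S)}"
proof (rule finite_subset)
  show "{card S | S. S \<subseteq> E \<and> \<not> connected_graph V (E - S)} \<subseteq> card ` Pow E" by auto
  show "finite (card ` Pow E)" using simple_graph_finite_edges[OF simple] by simp
qed

lemma edge_connectivity_le:
  assumes "S \<subseteq> E" "\<not> connected_graph V (E - S)"
  shows "edge_connectivity V E \<le> card S"
  unfolding edge_connectivity_def using finite_edge_cut_sizes assms by (auto intro: Min_le)

lemma edge_connectivity_le_boundary:
  assumes P: "P \<subseteq> V" "P \<noteq> {}" "V - P \<noteq> {}"
  shows "edge_connectivity V E \<le> card (Sigma P (\<lambda>x. nbhd E x - P))"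
proof -
  define S where "S = (\<lambda>(u, v). {u, v}) ` Sigma P (\<lambda>x. nbhd E x - P)"
  have "S \<subseteq> E" by (auto simp: S_def nbhd_def adj_def)
  moreover have "\<not> connected_graph V (E - S)"
  proof
    assume c: "connected_graph V (E - S)"
    obtain u w where uw: "u \<in> P" "w \<in> V" "w \<notin> P" using P by blast
    then have "reachable V (E - S) u w" using c P by (auto simp: connected_graph_def)
    then have "w \<in> P"
      by (rule reachable_closed)
        (use \<open>u \<in> P\<close> in \<open>auto simp: S_def nbhd_def adj_def image_iff\<close>)
    with uw show False by simp
  qed
  ultimately have "edge_connectivity V E \<le> card S" by (rule edge_connectivity_le)
  also have "\<dots> \<le> card (Sigma P (\<lambda>x. nbhd E x - P))"
    unfolding S_def
    by (intro card_image_le finite_SigmaI finite_subset[OF P(1) finite_vertices] finite_Diff finite_nbhd)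
  finally show ?thesis .
qed

lemma edge_connectivity_attained:
  obtains C where "C \<subseteq> V" "C \<noteq> {}" "V - C \<noteq> {}"
    "card (Sigma C (\<lambda>x. nbhd E x - C)) \<le> edge_connectivity V E"
proof -
  have "\<not> connected_graph V (E - E)"
  proof
    assume "connected_graph V (E - E)"
    obtain x where "x \<in> V" using vertices_nonempty by blast
    moreover obtain y where "y \<in> V" "y \<noteq> x" by (rule exists_other_vertex)
    moreover have "reachable V (E - E) x y \<Longrightarrow> x = y"
      unfolding reachable_def adj_def by (erule converse_rtranclpE) auto
    ultimately show False using \<open>connected_graph V (E - E)\<close> by (auto simp: connected_graph_def)
  qed
  then have "edge_connectivity V E \<in> {card S | S. S \<subseteq> E \<and> \<not> connected_graph V (E - S)}"
    unfolding edge_connectivity_def using finite_edge_cut_sizes by (intro Min_in) auto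
  then obtain S where S: "S \<subseteq> E" "\<not> connected_graph V (E - S)" "card S = edge_connectivity V E"
    by auto
  obtain x y where xy: "x \<in> V" "y \<in> V" "\<not> reachable V (E - S) x y"
    using S(2) vertices_nonempty by (auto simp: connected_graph_def)
  define C where "C = component V (E - S) x"
  have "x \<in> C" "y \<notin> C" using xy by (auto simp: C_def component_def reachable_def)
  then have C: "C \<subseteq> V" "C \<noteq> {}" "V - C \<noteq> {}"
    using xy(2) by (auto simp: C_def component_def)
  have "card (Sigma C (\<lambda>x. nbhd E x - C)) \<le> card S"
  proof (rule card_inj_on_le)
    show "inj_on (\<lambda>(u, v). {u, v}) (Sigma C (\<lambda>x. nbhd E x - C))"
      by (auto simp: inj_on_def doubleton_eq_iff)
    have "(\<lambda>(u, v). {u, v}) ` Sigma C (\<lambda>x. nbhd E x - C) \<subseteq> boundary E C"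
      by (auto simp: boundary_def nbhd_def adj_def)
    also have "\<dots> \<subseteq> S"
      unfolding C_def using simple by (intro boundary_of_component_subset) (auto simp: simple_graph_def)
    finally show "(\<lambda>(u, v). {u, v}) ` Sigma C (\<lambda>x. nbhd E x - C) \<subseteq> S" .
    show "finite S" using S(1) simple_graph_finite_edges[OF simple] finite_subset by blast
  qed
  with C S(3) show ?thesis by (intro that) auto
qed

lemma restricted_cut_lower_bound:
  assumes n: "2 \<le> n" and S: "restricted_edge_cut (V \<times> {0..<n}) (strong_E V E {0..<n} (complete_E n)) S"
  shows "min (n * n * edge_connectivity V E) (2 * (n + n * min_degree V E) - 4) \<le> card S"
proof -
  let ?EH = "strong_E V E {0..<n} (complete_E n)"
  have "V \<times> {0..<n} \<noteq> {}" using two_vertices n by auto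
  then obtain A where A: "A \<subseteq> V \<times> {0..<n}" "2 \<le> card A" "2 \<le> card (V \<times> {0..<n} - A)"
    "boundary ?EH A \<subseteq> S"
    using restricted_edge_cut_contains_boundary[OF _ strong_E_complete_subset[OF simple] S]
      finite_vertices by blast
  have "min (n * n * edge_connectivity V E) (2 * (n + n * min_degree V E) - 4)
      \<le> weighted_cut V (nbhd E) (fibre_count A n) (\<lambda>x. n - fibre_count A n x)"
    using A(1-3) card_eq_sum_fibre_count[OF finite_vertices A(1)]
      card_compl_eq_sum_fibre_count[OF finite_vertices, of n A]
    by (intro weighted_cut_lower_bound[OF n min_degree_pos min_degree_le edge_connectivity_le_boundary])
      (auto simp: fibre_count_le)
  also have "\<dots> = card (boundary ?EH A)"
    by (rule card_boundary_strong_product[OF simple A(1), symmetric])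
  also have "\<dots> \<le> card S"
    using A(4) S finite_strong_E_complete[OF simple]
    by (meson card_mono finite_subset restricted_edge_cut_def)
  finally show ?thesis .
qed

lemma lifted_cut:
  assumes n: "2 \<le> n" and C: "C \<subseteq> V" "c \<in> C" "y \<in> V" "y \<notin> C"
  defines "A \<equiv> C \<times> {0..<n}"
  shows "restricted_edge_cut (V \<times> {0..<n}) (strong_E V E {0..<n} (complete_E n))
      (boundary (strong_E V E {0..<n} (complete_E n)) A)"
    and "card (boundary (strong_E V E {0..<n} (complete_E n)) A)
      = n * n * card (Sigma C (\<lambda>x. nbhd E x - C))"
proof -
  have AV: "A \<subseteq> V \<times> {0..<n}" using C by (auto simp: A_def)
  have count: "fibre_count A n z = (if z \<in> C then n else 0)" for z
    by (simp add: fibre_count_def A_def)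
  show "restricted_edge_cut (V \<times> {0..<n}) (strong_E V E {0..<n} (complete_E n))
      (boundary (strong_E V E {0..<n} (complete_E n)) A)"
  proof (rule boundary_restricted_edge_cut[OF _ AV])
    show "(c, 0) \<in> A" "(y, 0) \<in> V \<times> {0..<n}" "(y, 0) \<notin> A" using C n by (auto simp: A_def)
    fix v assume v: "v \<in> V \<times> {0..<n}"
    let ?w = "(fst v, if snd v = 0 then 1 else 0)"
    show "\<exists>w\<in>V \<times> {0..<n}. w \<noteq> v \<and> {v, w} \<in> strong_E V E {0..<n} (complete_E n) \<and> (v \<in> A \<longleftrightarrow> w \<in> A)"
      using v n strong_E_complete_iff[OF simple, of v ?w n] by (intro bexI[of _ ?w]) (auto simp: A_def)
  qed (use finite_vertices in simp)
  have "{x \<in> V. fibre_count A n x = n} = C" using C n by (auto simp: count)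
  then show "card (boundary (strong_E V E {0..<n} (complete_E n)) A)
      = n * n * card (Sigma C (\<lambda>x. nbhd E x - C))"
    using card_boundary_strong_product[OF simple AV] weighted_cut_extreme[of "fibre_count A n" n]
    by (simp add: count)
qed

lemma fibre_pair_cut:
  assumes n: "4 \<le> n" and x0: "x0 \<in> V"
  defines "A \<equiv> {(x0, 0), (x0, 1)}"
  shows "restricted_edge_cut (V \<times> {0..<n}) (strong_E V E {0..<n} (complete_E n))
      (boundary (strong_E V E {0..<n} (complete_E n)) A)"
    and "card (boundary (strong_E V E {0..<n} (complete_E n)) A)
      = 2 * (n + n * card (nbhd E x0)) - 4"
proof -
  have AV: "A \<subseteq> V \<times> {0..<n}" using x0 n by (auto simp: A_def)
  show "restricted_edge_cut (V \<times> {0..<n}) (strong_E V E {0..<n} (complete_E n))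
      (boundary (strong_E V E {0..<n} (complete_E n)) A)"
  proof (rule boundary_restricted_edge_cut[OF _ AV])
    show "(x0, 0) \<in> A" "(x0, 2) \<in> V \<times> {0..<n}" "(x0, 2) \<notin> A" using x0 n by (auto simp: A_def)
    fix v assume v: "v \<in> V \<times> {0..<n}"
    obtain z k where vz: "v = (z, k)" by (cases v)
    txt \<open>Over \<open>x0\<close> the partners are \<open>0 \<leftrightarrow> 1\<close>, \<open>2 \<leftrightarrow> 3\<close> and \<open>k \<mapsto> 2\<close> for \<open>k \<ge> 4\<close>; this is
      where \<open>n \<ge> 4\<close> is needed.\<close>
    define w where "w = (z, if z = x0 then (if k = 0 then 1 else if k = 1 then 0 else if k = 2 then 3 else 2)
      else if k = 0 then 1 else (0::nat))"
    have "w \<in> V \<times> {0..<n}" "w \<noteq> v" "{v, w} \<in> strong_E V E {0..<n} (complete_E n)" "v \<in> A \<longleftrightarrow> w \<in> A"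
      using v n strong_E_complete_iff[OF simple, of v w n] unfolding w_def vz by (auto simp: A_def)
    then show "\<exists>w\<in>V \<times> {0..<n}. w \<noteq> v \<and> {v, w} \<in> strong_E V E {0..<n} (complete_E n) \<and> (v \<in> A \<longleftrightarrow> w \<in> A)"
      by blast
  qed (use finite_vertices in simp)
  have count: "fibre_count A n = (\<lambda>z. if z = x0 then 2 else 0)"
  proof
    fix z
    have "{y \<in> {0..<n}. (z, y) \<in> A} = (if z = x0 then {0, 1} else {})" using n by (auto simp: A_def)
    then show "fibre_count A n z = (if z = x0 then 2 else 0)" by (simp add: fibre_count_def)
  qed
  have "weighted_cut V (nbhd E) (fibre_count A n) (\<lambda>x. n - fibre_count A n x)
      = 2 * ((n - 2) + (\<Sum>z\<in>nbhd E x0. n))"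
  proof -
    have "(\<Sum>z\<in>nbhd E x0. n - (if z = x0 then 2 else 0)) = (\<Sum>z\<in>nbhd E x0. n)"
      using not_mem_nbhd[of x0] by (intro sum.cong) auto
    moreover have "(\<Sum>x\<in>V - {x0}. (if x = x0 then 2 else 0) * f x) = 0" for f :: "'a \<Rightarrow> nat"
      by (intro sum.neutral) auto
    ultimately show ?thesis
      unfolding weighted_cut_def count using x0 finite_vertices by (simp add: sum.remove)
  qed
  also have "\<dots> = 2 * (n + n * card (nbhd E x0)) - 4" using n by (simp add: mult.commute)
  finally show "card (boundary (strong_E V E {0..<n} (complete_E n)) A)
      = 2 * (n + n * card (nbhd E x0)) - 4"
    using card_boundary_strong_product[OF simple AV] by simp
qed

text \<open>The middle term of the theorem is never the minimum: \<open>m \<ge> \<delta> + 1\<close> and \<open>2e \<ge> m\<delta>\<close>.\<close>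
lemma min_degree_bound_le:
  assumes n: "4 \<le> n"
  shows "2 * (n + n * min_degree V E) - 4 \<le> (n - 1) * (card V + 2 * card E)"
proof -
  let ?m = "card V" and ?d = "min_degree V E"
  have "?m * ?d \<le> (\<Sum>x\<in>V. card (nbhd E x))"
    using sum_mono[of V "\<lambda>x. ?d" "\<lambda>x. card (nbhd E x)"] min_degree_le by simp
  then have handshake: "?m * ?d \<le> 2 * card E"
    using sum_card_nbhd_le[OF simple] by linarith
  obtain x0 where x0: "x0 \<in> V" "card (nbhd E x0) = ?d" by (rule min_degree_attained)
  have "card (nbhd E x0) \<le> card (V - {x0})"
    using nbhd_subset not_mem_nbhd finite_vertices by (intro card_mono) auto
  then have dm: "?d + 1 \<le> ?m" using x0 two_vertices by (simp add: card_Diff_singleton)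
  have "2 * (n + n * ?d) - 4 \<le> (n - 1) * (?m + ?m * ?d)"
  proof (cases "?m = 2")
    case True
    then have "?d = 1" using dm min_degree_pos by simp
    with True show ?thesis using n by (simp add: algebra_simps)
  next
    case False
    then have "3 \<le> ?m" using two_vertices by simp
    have "2 * n \<le> 3 * (n - 1)" using n by simp
    then have "2 * n * (1 + ?d) \<le> 3 * (n - 1) * (1 + ?d)" by (rule mult_le_mono1)
    also have "\<dots> \<le> (n - 1) * (?m + ?m * ?d)"
      using \<open>3 \<le> ?m\<close> mult_le_mono1[of 3 ?m "(n - 1) * (1 + ?d)"] by (simp add: algebra_simps)
    finally show ?thesis by (simp add: algebra_simps)
  qed
  also have "\<dots> \<le> (n - 1) * (?m + 2 * card E)" using handshake by simp
  finally show ?thesis .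
qed

end

theorem theorem3p7:
  fixes V :: "'a set" and E :: "'a set set" and n :: nat
  assumes "simple_graph V E"
    and "connected_graph V E"
    and "card V \<ge> 2"
    and "n \<ge> 4"
  shows "restricted_edge_connectivity (strong_V V (complete_V n)) (strong_E V E (complete_V n) (complete_E n))
         = min (n\<^sup>2 * edge_connectivity V E)
               (min ((n - 1) * (card V + 2 * card E)) (2 * n * min_degree V E + 2 * n - 4))"
proof -
  interpret connected_simple_graph V E using assms(1-3) by unfold_locales
  let ?EH = "strong_E V E {0..<n} (complete_E n)"
  have n: "2 \<le> n" using assms(4) by simp
  obtain C where C: "C \<subseteq> V" "C \<noteq> {}" "V - C \<noteq> {}"
    "card (Sigma C (\<lambda>x. nbhd E x - C)) \<le> edge_connectivity V E"
    by (rule edge_connectivity_attained)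
  then obtain c y where cy: "c \<in> C" "y \<in> V" "y \<notin> C" by blast
  obtain x0 where x0: "x0 \<in> V" "card (nbhd E x0) = min_degree V E"
    by (rule min_degree_attained)
  have "Min {card S | S. restricted_edge_cut (V \<times> {0..<n}) ?EH S}
      = min (n * n * edge_connectivity V E) (2 * (n + n * min_degree V E) - 4)"
  proof (rule Min_card_eq_min)
    show "finite {card S | S. restricted_edge_cut (V \<times> {0..<n}) ?EH S}"
      by (rule finite_restricted_cut_sizes[OF finite_strong_E_complete[OF simple]])
    show "min (n * n * edge_connectivity V E) (2 * (n + n * min_degree V E) - 4) \<le> card S"
      if "restricted_edge_cut (V \<times> {0..<n}) ?EH S" for S
      using restricted_cut_lower_bound[OF n that] .
    show "restricted_edge_cut (V \<times> {0..<n}) ?EH (boundary ?EH (C \<times> {0..<n}))"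
      "card (boundary ?EH (C \<times> {0..<n})) \<le> n * n * edge_connectivity V E"
      using lifted_cut[OF n C(1) cy] C(4) by simp_all
    show "restricted_edge_cut (V \<times> {0..<n}) ?EH (boundary ?EH {(x0, 0), (x0, 1)})"
      "card (boundary ?EH {(x0, 0), (x0, 1)}) \<le> 2 * (n + n * min_degree V E) - 4"
      using fibre_pair_cut[OF assms(4) x0(1)] x0(2) by simp_all
  qed
  moreover have "2 * n * min_degree V E + 2 * n - 4 = 2 * (n + n * min_degree V E) - 4"
    by (simp add: algebra_simps)
  ultimately show ?thesis
    using min_degree_bound_le[OF assms(4)]
    by (simp add: restricted_edge_connectivity_def strong_V_def complete_V_def power2_eq_square
        min_absorb2)
qed

end
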